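(* Let $n$ be a positive integer, let $d$ be an odd positive integer, $e = (d+1)/2$, $s \in \{1,2,3\}$, and let $S = \{m_1,\dots,m_e\}$ be a set of $e$ integers which is a Sidon-type set of strength $s$ in $\mathbb{Z}_n$. Then the $n$ column vectors of the $(d+1)\times n$ matrix $M(S) = \sqrt{2/(d+1)}\cdot A(S)$ form a spherical $s$-design on $S^d$.
   Context: For an integer $m$, $s(m) = \big(\sin(\tfrac{2\pi}{n}km)\big)_{k=1}^n$ and $c(m) = \big(\cos(\tfrac{2\pi}{n}km)\big)_{k=1}^n$ in $\mathbb{R}^n$; $A(S)$ is the $2e\times n$ matrix with rows $s(m_1),c(m_1),\dots,s(m_e),c(m_e)$. A set $S$ of integers is a Sidon-type set of strength $t$ in $\mathbb{Z}_n$ if no non-trivial sum $\varepsilon_1x_1+\cdots+\varepsilon_tx_t$ with $\varepsilon_i\in\{0,\pm1\}$ and $x_i\in S$ (not necessarily distinct) is $\equiv 0 \bmod n$; a sum is non-trivial if some $\varepsilon_i\neq 0$ and no element appears with both coefficients $+1$ and $-1$. $S^d$ is the unit sphere in $\mathbb{R}^{d+1}$; a collection of $n$ points of $S^d$ (columns of a matrix, counted with multiplicity) is a spherical $t$-design if for every polynomial of degree at most $t$ its average over $S^d$ (surface measure) equals its arithmetic average over the $n$ points. *)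

theory Defs
  imports "HOL-Analysis.Analysis"
begin

text \<open>Points of R^(d+1) are represented as functions nat => real, coordinates 0..d.\<close>

definition sph_norm :: "nat \<Rightarrow> (nat \<Rightarrow> real) \<Rightarrow> real" where
  "sph_norm d x = sqrt (\<Sum>i\<le>d. (x i)^2)"

definition unit_sphere :: "nat \<Rightarrow> (nat \<Rightarrow> real) set" where
  "unit_sphere d = {x. (\<forall>i>d. x i = 0) \<and> sph_norm d x = 1}"

definition leb :: "nat \<Rightarrow> (nat \<Rightarrow> real) measure" where
  "leb d = PiM {..d} (\<lambda>_. lborel)"

definition unit_ball :: "nat \<Rightarrow> (nat \<Rightarrow> real) set" where
  "unit_ball d = {x \<in> space (leb d). sph_norm d x \<le> 1}"

text \<open>Average of f over S^d w.r.t. the (normalized) surface measure, realized as the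
  push-forward of normalized Lebesgue measure on the unit ball under radial projection.\<close>
definition sphere_avg :: "nat \<Rightarrow> ((nat \<Rightarrow> real) \<Rightarrow> real) \<Rightarrow> real" where
  "sphere_avg d f =
     set_lebesgue_integral (leb d) (unit_ball d) (\<lambda>x. f (\<lambda>i. x i / sph_norm d x))
       / measure (leb d) (unit_ball d)"

definition poly_deg_le :: "nat \<Rightarrow> nat \<Rightarrow> ((nat \<Rightarrow> real) \<Rightarrow> real) \<Rightarrow> bool" where
  "poly_deg_le d t f \<longleftrightarrow>
     (\<exists>c :: (nat \<Rightarrow> nat) \<Rightarrow> real. \<forall>x. f x =
        (\<Sum>\<alpha>\<in>{\<alpha>\<in>{..d} \<rightarrow>\<^sub>E {..t}. (\<Sum>i\<le>d. \<alpha> i) \<le> t}. c \<alpha> * (\<Prod>i\<le>d. x i ^ \<alpha> i)))"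

definition spherical_design :: "nat \<Rightarrow> nat \<Rightarrow> nat \<Rightarrow> (nat \<Rightarrow> nat \<Rightarrow> real) \<Rightarrow> bool" where
  "spherical_design d t N p \<longleftrightarrow>
     (\<forall>k\<in>{1..N}. p k \<in> unit_sphere d) \<and>
     (\<forall>f. poly_deg_le d t f \<longrightarrow> sphere_avg d f = (\<Sum>k=1..N. f (p k)) / real N)"

definition sidon_type :: "int set \<Rightarrow> nat \<Rightarrow> nat \<Rightarrow> bool" where
  "sidon_type S t n \<longleftrightarrow>
     (\<forall>(\<epsilon>::nat \<Rightarrow> int) (x::nat \<Rightarrow> int).
        (\<forall>i\<in>{1..t}. \<epsilon> i \<in> {-1, 0, 1} \<and> x i \<in> S) \<and>
        (\<exists>i\<in>{1..t}. \<epsilon> i \<noteq> 0) \<and>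
        \<not> (\<exists>i\<in>{1..t}. \<exists>j\<in>{1..t}. \<epsilon> i = 1 \<and> \<epsilon> j = -1 \<and> x i = x j)
        \<longrightarrow> (\<Sum>i=1..t. \<epsilon> i * x i) mod int n \<noteq> 0)"

text \<open>Entry (i,k) of A(S), rows 0-based (row 2j = s(m_(j+1)), row 2j+1 = c(m_(j+1))),
  columns k = 1..n.\<close>
definition A_entry :: "nat \<Rightarrow> (nat \<Rightarrow> int) \<Rightarrow> nat \<Rightarrow> nat \<Rightarrow> real" where
  "A_entry n m i k =
     (if even i then sin (2 * pi / real n * real k * real_of_int (m (i div 2 + 1)))
      else cos (2 * pi / real n * real k * real_of_int (m (i div 2 + 1))))"

definition M_col :: "nat \<Rightarrow> nat \<Rightarrow> (nat \<Rightarrow> int) \<Rightarrow> nat \<Rightarrow> nat \<Rightarrow> real" where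
  "M_col d n m k = (\<lambda>i. if i \<le> d then sqrt (2 / real (d + 1)) * A_entry n m i k else 0)"

end

theory Submission
  imports Defs "HOL-Combinatorics.Transposition"
begin

(* Both sides of the design identity are linear in the polynomial, so it suffices to compare them
   on monomials x_j1 ... x_jr with r <= s <= 3.

   On the sphere, the reflection in one coordinate kills every monomial in which some variable
   occurs to an odd power, and transposing two coordinates shows that all x_a^2 have the same
   average, which is therefore 1/(d+1) since they sum to 1. So up to degree 3 the only non-zero
   moments are 1 and the diagonal second moments.

   At the columns of M(S), a product of at most three entries expands, by the product-to-sum
   formulas, into sines and cosines of the angles 2 pi k (m_a +- m_b +- m_c) / n, and the Sidon
   condition of strength s says precisely that these frequencies are non-zero mod n, so their sums
   over k = 1..n vanish. The only survivors are sin^2 and cos^2 of a single angle, which average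
   to 1/2 and, after the scaling by 2/(d+1), give 1/(d+1). *)

section \<open>Sidon-type sets\<close>

lemma sidon_typeD:
  assumes "sidon_type S t n"
    and "\<forall>i\<in>{1..t}. \<epsilon> i \<in> {-1, 0, 1} \<and> x i \<in> S" and "\<exists>i\<in>{1..t}. \<epsilon> i \<noteq> 0"
    and "\<not> (\<exists>i\<in>{1..t}. \<exists>j\<in>{1..t}. \<epsilon> i = 1 \<and> \<epsilon> j = -1 \<and> x i = x j)"
  shows "\<not> int n dvd (\<Sum>i=1..t. \<epsilon> i * x i)"
  using assms(1)[unfolded sidon_type_def, rule_format, of \<epsilon> x] assms(2-4)
  by (simp add: dvd_eq_mod_eq_0)

lemma sidon_type_mono:
  assumes "sidon_type S t n" and "t' \<le> t"
  shows "sidon_type S t' n"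
  unfolding sidon_type_def
proof (intro allI impI)
  fix \<epsilon> x :: "nat \<Rightarrow> int"
  assume hyp: "(\<forall>i\<in>{1..t'}. \<epsilon> i \<in> {-1, 0, 1} \<and> x i \<in> S) \<and> (\<exists>i\<in>{1..t'}. \<epsilon> i \<noteq> 0) \<and>
    \<not> (\<exists>i\<in>{1..t'}. \<exists>j\<in>{1..t'}. \<epsilon> i = 1 \<and> \<epsilon> j = -1 \<and> x i = x j)"
  then have "1 \<le> t'" by auto
  define \<epsilon>' where "\<epsilon>' i = (if i \<le> t' then \<epsilon> i else 0)" for i
  define x' where "x' i = (if i \<le> t' then x i else x 1)" for i
  have "\<not> int n dvd (\<Sum>i=1..t. \<epsilon>' i * x' i)"
  proof (rule sidon_typeD[OF assms(1)])
    show "\<forall>i\<in>{1..t}. \<epsilon>' i \<in> {-1, 0, 1} \<and> x' i \<in> S"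
      using hyp \<open>1 \<le> t'\<close> by (simp add: \<epsilon>'_def x'_def)
    show "\<exists>i\<in>{1..t}. \<epsilon>' i \<noteq> 0"
      using hyp \<open>t' \<le> t\<close> by (force simp: \<epsilon>'_def)
    show "\<not> (\<exists>i\<in>{1..t}. \<exists>j\<in>{1..t}. \<epsilon>' i = 1 \<and> \<epsilon>' j = -1 \<and> x' i = x' j)"
      using hyp by (simp add: \<epsilon>'_def x'_def)
  qed
  moreover have "(\<Sum>i=1..t. \<epsilon>' i * x' i) = (\<Sum>i=1..t'. \<epsilon> i * x i)"
    using \<open>t' \<le> t\<close> by (intro sum.mono_neutral_cong_right) (auto simp: \<epsilon>'_def x'_def)
  ultimately show "(\<Sum>i=1..t'. \<epsilon> i * x i) mod int n \<noteq> 0"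
    by (simp add: dvd_eq_mod_eq_0)
qed

lemma sidon_type_1_not_dvd:
  assumes "sidon_type S 1 n" and "x \<in> S"
  shows "\<not> int n dvd x"
  using sidon_typeD[OF assms(1), of "\<lambda>_. 1" "\<lambda>_. x"] assms(2) by simp

lemma sidon_type_2_not_dvd:
  assumes S: "sidon_type S 2 n" and "x \<in> S" "y \<in> S" and "\<delta> \<in> {-1, 1}"
    and "\<delta> = -1 \<Longrightarrow> x \<noteq> y"
  shows "\<not> int n dvd (x + \<delta> * y)"
proof -
  have two: "{1..2::nat} = {1, 2}" by auto
  show ?thesis
    using sidon_typeD[OF S, of "\<lambda>i. if i = 1 then 1 else \<delta>" "\<lambda>i. if i = 1 then x else y"] assms
    unfolding two by auto
qed

lemma sidon_type_3_not_dvd: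
  assumes S: "sidon_type S 3 n" and "x \<in> S" "y \<in> S" "z \<in> S" and \<delta>\<eta>: "\<delta> \<in> {-1, 1}" "\<eta> \<in> {-1, 1}"
  shows "\<not> int n dvd (x + \<delta> * y + \<eta> * z)"
proof (cases "(\<delta> = -1 \<and> y = x) \<or> (\<eta> = -1 \<and> z = x) \<or> (\<delta> \<noteq> \<eta> \<and> y = z)")
  case True
  \<comment> \<open>a coefficient \<open>+1\<close> and a coefficient \<open>-1\<close> on the same element cancel, leaving \<open>\<plusminus>\<close> one element\<close>
  then obtain w where "w \<in> S" and "x + \<delta> * y + \<eta> * z \<in> {w, -w}"
    using \<delta>\<eta> assms(2-4) by auto
  moreover have "\<not> int n dvd w" if "w \<in> S" for w
    using sidon_type_1_not_dvd[OF sidon_type_mono[OF S] that] by simp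
  ultimately show ?thesis by (auto simp only: insert_iff empty_iff dvd_minus_iff)
next
  case False
  define \<epsilon> where "\<epsilon> i = (if i = 1 then 1 else if i = 2 then \<delta> else \<eta>)" for i :: nat
  define X where "X i = (if i = 1 then x else if i = 2 then y else z)" for i :: nat
  have three: "{1..3::nat} = {1, 2, 3}" by auto
  have "\<not> int n dvd (\<Sum>i=1..3. \<epsilon> i * X i)"
  proof (rule sidon_typeD[OF S])
    show "\<forall>i\<in>{1..3}. \<epsilon> i \<in> {-1, 0, 1} \<and> X i \<in> S"
      using \<delta>\<eta> assms(2-4) unfolding three by (auto simp: \<epsilon>_def X_def)
    show "\<exists>i\<in>{1..3}. \<epsilon> i \<noteq> 0" by (rule bexI[of _ 1]) (simp_all add: \<epsilon>_def)
    show "\<not> (\<exists>i\<in>{1..3}. \<exists>j\<in>{1..3}. \<epsilon> i = 1 \<and> \<epsilon> j = -1 \<and> X i = X j)"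
      using False \<delta>\<eta> unfolding three \<epsilon>_def X_def by auto
  qed
  then show ?thesis unfolding three by (simp add: \<epsilon>_def X_def add.assoc)
qed

section \<open>Sines and cosines summed over the n-th roots of unity\<close>

definition root_angle :: "nat \<Rightarrow> nat \<Rightarrow> int \<Rightarrow> real" where
  "root_angle n k N = 2 * pi / real n * real k * real_of_int N"

lemma root_angle_add: "root_angle n k a + root_angle n k b = root_angle n k (a + b)"
  by (simp add: root_angle_def distrib_left)

lemma root_angle_diff: "root_angle n k a - root_angle n k b = root_angle n k (a - b)"
  by (simp add: root_angle_def right_diff_distrib)

lemma sum_cis_root_angle:
  assumes "n > 0" and "\<not> int n dvd N"
  shows "(\<Sum>k=1..n. cis (root_angle n k N)) = 0"
proof -
  define w where "w = cis (2 * pi * real_of_int N / real n)"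
  have power_w: "w ^ k = cis (root_angle n k N)" for k
    by (simp only: w_def Complex.DeMoivre) (simp add: root_angle_def algebra_simps)
  have "w ^ n = 1"
    unfolding power_w root_angle_def using \<open>n > 0\<close> by (simp add: cis_conv_exp exp_eq_1)
  moreover have "w \<noteq> 1"
  proof
    assume "w = 1"
    then obtain j :: int where "2 * pi * real_of_int N / real n = 2 * pi * real_of_int j"
      unfolding w_def cis_conv_exp exp_eq_1 by auto
    then have "real_of_int N = real n * real_of_int j" using \<open>n > 0\<close> by (simp add: field_simps)
    then have "N = int n * j" by (metis of_int_eq_iff of_int_mult of_int_of_nat_eq)
    then show False using \<open>\<not> int n dvd N\<close> by simp
  qed
  moreover have "(\<Sum>k=1..n. cis (root_angle n k N)) = w * (\<Sum>k<n. w ^ k)"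
    by (simp add: power_w[symmetric] sum.atLeast1_atMost_eq sum_distrib_left)
  ultimately show ?thesis using geometric_sum[of w n] by simp
qed

lemma sum_sin_cos_root_angle:
  assumes "n > 0" and "\<not> int n dvd N" and "g \<in> {sin, cos}"
  shows "(\<Sum>k=1..n. g (root_angle n k N)) = 0"
proof -
  have "Re (\<Sum>k=1..n. cis (root_angle n k N)) = 0" "Im (\<Sum>k=1..n. cis (root_angle n k N)) = 0"
    using sum_cis_root_angle[OF assms(1,2)] by auto
  then show ?thesis using assms(3) by (auto simp: Re_sum Im_sum)
qed

lemma sin_cos_product_to_sum:
  assumes "g1 \<in> {sin, cos}" and "g2 \<in> {sin, cos}"
  obtains h1 h2 c1 c2 where "h1 \<in> {sin, cos}" and "h2 \<in> {sin, cos}"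
    and "\<And>x y :: real. g1 x * g2 y = c1 * h1 (x + y) + c2 * h2 (x - y)"
proof -
  have "sin x * sin y = - (1/2) * cos (x + y) + 1/2 * cos (x - y)"
    and "sin x * cos y = 1/2 * sin (x + y) + 1/2 * sin (x - y)"
    and "cos x * sin y = 1/2 * sin (x + y) + - (1/2) * sin (x - y)"
    and "cos x * cos y = 1/2 * cos (x + y) + 1/2 * cos (x - y)" for x y :: real
    by (simp_all add: sin_times_sin sin_times_cos cos_times_sin cos_times_cos)
  with assms that show ?thesis by blast
qed

lemma sum_sin_cos_product2_root_angle:
  assumes n: "n > 0" and g: "g1 \<in> {sin, cos}" "g2 \<in> {sin, cos}"
    and "\<not> int n dvd (a + b)" "\<not> int n dvd (a - b)"
  shows "(\<Sum>k=1..n. g1 (root_angle n k a) * g2 (root_angle n k b)) = 0"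
proof -
  obtain h1 h2 c1 c2 where h: "h1 \<in> {sin, cos}" "h2 \<in> {sin, cos}"
    and prod: "\<And>x y. g1 x * g2 y = c1 * h1 (x + y) + c2 * h2 (x - y)"
    using sin_cos_product_to_sum[OF g] by blast
  have "(\<Sum>k=1..n. g1 (root_angle n k a) * g2 (root_angle n k b))
      = c1 * (\<Sum>k=1..n. h1 (root_angle n k (a + b))) + c2 * (\<Sum>k=1..n. h2 (root_angle n k (a - b)))"
    by (simp add: prod root_angle_add root_angle_diff sum.distrib sum_distrib_left)
  also have "\<dots> = 0"
    using sum_sin_cos_root_angle[OF n _ h(1)] sum_sin_cos_root_angle[OF n _ h(2)] assms(4,5) by simp
  finally show ?thesis .
qed

lemma sum_sin_cos_product3_root_angle:
  assumes n: "n > 0" and g: "g1 \<in> {sin, cos}" "g2 \<in> {sin, cos}" "g3 \<in> {sin, cos}"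
    and "\<And>\<delta> \<eta>. \<delta> \<in> {-1, 1} \<Longrightarrow> \<eta> \<in> {-1, 1} \<Longrightarrow> \<not> int n dvd (a + \<delta> * b + \<eta> * c)"
  shows "(\<Sum>k=1..n. g1 (root_angle n k a) * g2 (root_angle n k b) * g3 (root_angle n k c)) = 0"
proof -
  obtain h1 h2 c1 c2 where h: "h1 \<in> {sin, cos}" "h2 \<in> {sin, cos}"
    and prod: "\<And>x y. g1 x * g2 y = c1 * h1 (x + y) + c2 * h2 (x - y)"
    using sin_cos_product_to_sum[OF g(1,2)] by blast
  have "\<not> int n dvd (a + b + c)" "\<not> int n dvd (a + b - c)"
    "\<not> int n dvd (a - b + c)" "\<not> int n dvd (a - b - c)"
    using assms(5)[of 1 1] assms(5)[of 1 "-1"] assms(5)[of "-1" 1] assms(5)[of "-1" "-1"] by simp_all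
  then have "(\<Sum>k=1..n. h1 (root_angle n k (a + b)) * g3 (root_angle n k c)) = 0"
    "(\<Sum>k=1..n. h2 (root_angle n k (a - b)) * g3 (root_angle n k c)) = 0"
    using sum_sin_cos_product2_root_angle[OF n h(1) g(3), of "a + b" c]
      sum_sin_cos_product2_root_angle[OF n h(2) g(3), of "a - b" c] by (simp_all add: algebra_simps)
  moreover have "(\<Sum>k=1..n. g1 (root_angle n k a) * g2 (root_angle n k b) * g3 (root_angle n k c))
      = c1 * (\<Sum>k=1..n. h1 (root_angle n k (a + b)) * g3 (root_angle n k c))
        + c2 * (\<Sum>k=1..n. h2 (root_angle n k (a - b)) * g3 (root_angle n k c))"
    by (simp add: prod root_angle_add root_angle_diff sum.distrib sum_distrib_left algebra_simps)
  ultimately show ?thesis by simp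
qed

lemma root_angle_double: "root_angle n k (2 * N) = 2 * root_angle n k N"
  by (simp add: root_angle_def)

lemma sum_sin_cos_square_root_angle:
  assumes "n > 0" and "\<not> int n dvd (2 * N)" and "g \<in> {sin, cos}"
  shows "(\<Sum>k=1..n. g (root_angle n k N) * g (root_angle n k N)) = real n / 2"
proof -
  obtain c where square: "\<And>x. g x * g x = (1 + c * cos (2 * x)) / 2"
  proof -
    consider "g = sin" | "g = cos" using \<open>g \<in> {sin, cos}\<close> by blast
    then show thesis
    proof cases
      case 1
      then show thesis by (intro that[of "-1"]) (simp add: cos_double_sin power2_eq_square)
    next
      case 2
      then show thesis by (intro that[of 1]) (simp add: cos_double_cos power2_eq_square)
    qed
  qed
  have "(\<Sum>k=1..n. cos (root_angle n k (2 * N))) = 0"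
    using sum_sin_cos_root_angle[OF assms(1,2)] by simp
  then show ?thesis
    by (simp add: square root_angle_double sum_divide_distrib[symmetric] sum.distrib
        sum_distrib_left[symmetric])
qed

lemma sum_sin_times_cos_root_angle:
  assumes "n > 0" and "\<not> int n dvd (2 * N)"
  shows "(\<Sum>k=1..n. sin (root_angle n k N) * cos (root_angle n k N)) = 0"
proof -
  have "(\<Sum>k=1..n. sin (root_angle n k (2 * N))) = 0"
    using sum_sin_cos_root_angle[OF assms] by simp
  then show ?thesis
    by (simp add: root_angle_double sin_double mult.assoc sum_distrib_left[symmetric])
qed

section \<open>Moments of the columns of M(S)\<close>

lemma length_le_3_cases:
  assumes "length xs \<le> 3"
  obtains "xs = []" | a where "xs = [a]" | a b where "xs = [a, b]" | a b c where "xs = [a, b, c]"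
  using assms by (cases xs; cases "tl xs"; cases "tl (tl xs)"; cases "tl (tl (tl xs))") auto

text \<open>The moments of the normalized surface measure on \<open>S\<^sup>d\<close> of degree at most 3; from degree 4 on
  they are no longer of this form.\<close>
definition low_sphere_moment :: "nat \<Rightarrow> nat list \<Rightarrow> real" where
  "low_sphere_moment d js =
     (case js of [] \<Rightarrow> 1 | [a, b] \<Rightarrow> if a = b then 1 / (real d + 1) else 0 | _ \<Rightarrow> 0)"

definition row_trig :: "nat \<Rightarrow> real \<Rightarrow> real" where
  "row_trig i = (if even i then sin else cos)"

lemma row_trig_sin_cos: "row_trig i \<in> {sin, cos}"
  by (simp add: row_trig_def)

lemma A_entry_eq_row_trig: "A_entry n m i k = row_trig i (root_angle n k (m (i div 2 + 1)))"
  by (simp add: A_entry_def row_trig_def root_angle_def)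

lemma row_index_bound:
  fixes d e i :: nat
  assumes "d + 1 = 2 * e" and "i \<le> d"
  shows "i div 2 + 1 \<in> {1..e}"
  using assms by auto

lemma M_col_in_unit_sphere:
  assumes "d + 1 = 2 * e"
  shows "M_col d n m k \<in> unit_sphere d"
proof -
  have d: "d = Suc (2 * (e - 1))" using assms by auto
  have "(\<Sum>i\<le>d. (A_entry n m i k)\<^sup>2) = (\<Sum>j\<le>e - 1. 1)"
    unfolding d sum.in_pairs_0 by (simp add: A_entry_def)
  then have rows: "(\<Sum>i\<le>d. (A_entry n m i k)\<^sup>2) = real e"
    using assms by simp
  have "(\<Sum>i\<le>d. (M_col d n m k i)\<^sup>2) = 2 / real (d + 1) * (\<Sum>i\<le>d. (A_entry n m i k)\<^sup>2)"
    by (simp add: M_col_def power_mult_distrib sum_distrib_left)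
  also have "\<dots> = 1" using rows assms by (simp add: field_simps)
  finally show ?thesis by (simp add: unit_sphere_def sph_norm_def M_col_def)
qed

lemma prod_list_M_col:
  assumes "set js \<subseteq> {..d}"
  shows "prod_list (map (M_col d n m k) js)
    = sqrt (2 / real (d + 1)) ^ length js * prod_list (map (\<lambda>i. A_entry n m i k) js)"
  using assms by (induction js) (auto simp: M_col_def)

lemma sum_A_entry:
  assumes "n > 0" and "d + 1 = 2 * e" and "a \<le> d" and "sidon_type (m ` {1..e}) 1 n"
  shows "(\<Sum>k=1..n. A_entry n m a k) = 0"
  using sum_sin_cos_root_angle[OF \<open>n > 0\<close> _ row_trig_sin_cos]
    sidon_type_1_not_dvd[OF assms(4) imageI[OF row_index_bound[OF assms(2,3)]]]
  by (simp add: A_entry_eq_row_trig)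

lemma sum_A_entry_product2:
  assumes n: "n > 0" and de: "d + 1 = 2 * e" and "a \<le> d" "b \<le> d" and inj: "inj_on m {1..e}"
    and S: "sidon_type (m ` {1..e}) 2 n"
  shows "(\<Sum>k=1..n. A_entry n m a k * A_entry n m b k) = (if a = b then real n / 2 else 0)"
proof -
  define j j' where "j = a div 2 + 1" and "j' = b div 2 + 1"
  have jj': "j \<in> {1..e}" "j' \<in> {1..e}"
    unfolding j_def j'_def using row_index_bound[OF de] \<open>a \<le> d\<close> \<open>b \<le> d\<close> by auto
  have double: "\<not> int n dvd (2 * m j)"
    using sidon_type_2_not_dvd[OF S, of "m j" "m j" 1] jj' by simp
  show ?thesis
  proof (cases "j = j'")
    case False
    then have "m j \<noteq> m j'" using inj jj' by (auto dest: inj_onD)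
    then have "\<not> int n dvd (m j + m j')" "\<not> int n dvd (m j - m j')"
      using sidon_type_2_not_dvd[OF S, of "m j" "m j'" 1] sidon_type_2_not_dvd[OF S, of "m j" "m j'" "-1"]
        jj' by simp_all
    with False show ?thesis
      using sum_sin_cos_product2_root_angle[OF n row_trig_sin_cos row_trig_sin_cos]
      by (auto simp: A_entry_eq_row_trig j_def j'_def)
  next
    case True
    show ?thesis
    proof (cases "a = b")
      case True
      then show ?thesis
        using sum_sin_cos_square_root_angle[OF n double row_trig_sin_cos]
        by (simp add: A_entry_eq_row_trig j_def)
    next
      case False
      with \<open>j = j'\<close> have "even a \<noteq> even b" unfolding j_def j'_def by presburger
      then have "A_entry n m a k * A_entry n m b k
          = sin (root_angle n k (m j)) * cos (root_angle n k (m j))" for k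
        using \<open>j = j'\<close> by (auto simp: A_entry_def root_angle_def j_def j'_def)
      then show ?thesis
        using sum_sin_times_cos_root_angle[OF n double] False by simp
    qed
  qed
qed

lemma sum_A_entry_product3:
  assumes "n > 0" and de: "d + 1 = 2 * e" and "a \<le> d" "b \<le> d" "c \<le> d"
    and S: "sidon_type (m ` {1..e}) 3 n"
  shows "(\<Sum>k=1..n. A_entry n m a k * A_entry n m b k * A_entry n m c k) = 0"
proof -
  have "m (a div 2 + 1) \<in> m ` {1..e}" "m (b div 2 + 1) \<in> m ` {1..e}" "m (c div 2 + 1) \<in> m ` {1..e}"
    using row_index_bound[OF de] assms(3-5) by auto
  then have "\<not> int n dvd (m (a div 2 + 1) + \<delta> * m (b div 2 + 1) + \<eta> * m (c div 2 + 1))"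
    if "\<delta> \<in> {-1, 1}" "\<eta> \<in> {-1, 1}" for \<delta> \<eta>
    using sidon_type_3_not_dvd[OF S _ _ _ that] by blast
  then show ?thesis
    unfolding A_entry_eq_row_trig
    by (rule sum_sin_cos_product3_root_angle[OF \<open>n > 0\<close> row_trig_sin_cos row_trig_sin_cos row_trig_sin_cos])
qed

lemma average_M_col_monomial:
  assumes n: "n > 0" and de: "d + 1 = 2 * e" and inj: "inj_on m {1..e}"
    and js: "set js \<subseteq> {..d}" "length js \<le> 3" and S: "sidon_type (m ` {1..e}) (length js) n"
  shows "(\<Sum>k=1..n. prod_list (map (M_col d n m k) js)) / real n = low_sphere_moment d js"
proof -
  let ?\<gamma> = "sqrt (2 / real (d + 1))"
  have "(\<Sum>k=1..n. prod_list (map (M_col d n m k) js)) / real n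
      = ?\<gamma> ^ length js * (\<Sum>k=1..n. prod_list (map (\<lambda>i. A_entry n m i k) js)) / real n"
    by (simp add: prod_list_M_col[OF js(1)] sum_distrib_left)
  also have "\<dots> = low_sphere_moment d js"
    using \<open>length js \<le> 3\<close>
  proof (cases rule: length_le_3_cases)
    case 1
    then show ?thesis using n by (simp add: low_sphere_moment_def)
  next
    case (2 a)
    then have "(\<Sum>k=1..n. A_entry n m a k) = 0"
      using sum_A_entry[OF n de, of a m] S js by simp
    then show ?thesis using 2 by (simp add: low_sphere_moment_def)
  next
    case (3 a b)
    then have "sidon_type (m ` {1..e}) 2 n" using S by (simp add: numeral_2_eq_2)
    then have sum: "(\<Sum>k=1..n. A_entry n m a k * A_entry n m b k) = (if a = b then real n / 2 else 0)"
      using sum_A_entry_product2[OF n de _ _ inj, of a b] js 3 by simp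
    have "?\<gamma> ^ 2 * (real n / 2) / real n = ?\<gamma> ^ 2 / 2"
      using n by simp
    also have "\<dots> = 1 / (real d + 1)"
      by (simp add: divide_simps)
    finally have "?\<gamma> ^ 2 * (real n / 2) / real n = 1 / (real d + 1)" .
    with sum show ?thesis using 3 by (auto simp: low_sphere_moment_def)
  next
    case (4 a b c)
    then have "sidon_type (m ` {1..e}) 3 n" using S by (simp add: numeral_3_eq_3)
    then have "(\<Sum>k=1..n. A_entry n m a k * A_entry n m b k * A_entry n m c k) = 0"
      using sum_A_entry_product3[OF n de, of a b c m] js 4 by simp
    then show ?thesis using 4 by (simp add: low_sphere_moment_def mult.assoc)
  qed
  finally show ?thesis .
qed

section \<open>Moments of the sphere\<close>

lemma sph_norm_nonneg: "0 \<le> sph_norm d x"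
  by (simp add: sph_norm_def sum_nonneg)

lemma abs_le_sph_norm: "i \<le> d \<Longrightarrow> \<bar>x i\<bar> \<le> sph_norm d x"
  unfolding sph_norm_def
  by (rule real_le_rsqrt) (auto intro!: member_le_sum simp: power2_eq_square[symmetric])

lemma space_leb: "space (leb d) = {..d} \<rightarrow>\<^sub>E UNIV"
  by (simp add: leb_def space_PiM)

lemma product_sigma_finite_lborel: "product_sigma_finite (\<lambda>_. lborel)"
  by (simp add: product_sigma_finite_def lborel.sigma_finite_measure_axioms)

lemma PiE_in_sets_leb: "(\<And>i. i \<le> d \<Longrightarrow> A i \<in> sets lborel) \<Longrightarrow> PiE {..d} A \<in> sets (leb d)"
  unfolding leb_def by (rule sets_PiM_I_finite) auto

lemma emeasure_leb_PiE:
  assumes "\<And>i. i \<le> d \<Longrightarrow> A i \<in> sets lborel"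
  shows "emeasure (leb d) (PiE {..d} A) = (\<Prod>i\<le>d. emeasure lborel (A i))"
  unfolding leb_def using assms
  by (subst product_sigma_finite.emeasure_PiM[OF product_sigma_finite_lborel]) auto

lemma component_measurable_leb [measurable]: "i \<le> d \<Longrightarrow> (\<lambda>x. x i) \<in> borel_measurable (leb d)"
  unfolding leb_def using measurable_component_singleton[of i "{..d}" "\<lambda>_. lborel"] by simp

lemma sph_norm_measurable [measurable]: "sph_norm d \<in> borel_measurable (leb d)"
  unfolding sph_norm_def by measurable

lemma unit_ball_in_sets [measurable]: "unit_ball d \<in> sets (leb d)"
  unfolding unit_ball_def by measurable

lemma emeasure_unit_ball_finite: "emeasure (leb d) (unit_ball d) < \<infinity>"
proof -
  have "unit_ball d \<subseteq> PiE {..d} (\<lambda>_. {-1..1})"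
  proof
    fix x assume "x \<in> unit_ball d"
    then have "x \<in> {..d} \<rightarrow>\<^sub>E UNIV" and "sph_norm d x \<le> 1"
      unfolding unit_ball_def space_leb by auto
    then show "x \<in> PiE {..d} (\<lambda>_. {-1..1})"
      using abs_le_sph_norm[of _ d x] by (force simp: PiE_iff abs_le_iff)
  qed
  then have "emeasure (leb d) (unit_ball d) \<le> emeasure (leb d) (PiE {..d} (\<lambda>_. {-1..1}))"
    by (intro emeasure_mono PiE_in_sets_leb) auto
  also have "\<dots> = (\<Prod>i\<le>d. emeasure lborel {-1..(1::real)})"
    by (rule emeasure_leb_PiE) simp
  also have "\<dots> < \<infinity>" by (simp add: ennreal_mult_less_top power_less_top_ennreal)
  finally show ?thesis .
qed

lemma emeasure_unit_ball_pos: "emeasure (leb d) (unit_ball d) > 0"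
proof -
  define r where "r = 1 / (real d + 1)"
  have r: "0 < r" "r \<le> 1" unfolding r_def by auto
  have "PiE {..d} (\<lambda>_. {0..r}) \<subseteq> unit_ball d"
  proof
    fix x assume x: "x \<in> PiE {..d} (\<lambda>_. {0..r})"
    have "(\<Sum>i\<le>d. (x i)\<^sup>2) \<le> (\<Sum>i\<le>d. r)"
    proof (rule sum_mono)
      fix i assume "i \<in> {..d}"
      then have "0 \<le> x i" "x i \<le> r" using x by auto
      then have "(x i)\<^sup>2 \<le> r\<^sup>2" by (intro power_mono)
      also have "r\<^sup>2 \<le> r" using r by (simp add: power2_eq_square mult_le_cancel_right1)
      finally show "(x i)\<^sup>2 \<le> r" .
    qed
    also have "\<dots> = 1" unfolding r_def by simp
    finally show "x \<in> unit_ball d"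
      using x by (auto simp: unit_ball_def space_leb sph_norm_def)
  qed
  then have box_le: "emeasure (leb d) (PiE {..d} (\<lambda>_. {0..r})) \<le> emeasure (leb d) (unit_ball d)"
    by (rule emeasure_mono) (rule unit_ball_in_sets)
  have "0 < ennreal (r ^ Suc d)" using r by simp
  also have "\<dots> = emeasure (leb d) (PiE {..d} (\<lambda>_. {0..r}))"
    using r by (simp add: emeasure_leb_PiE ennreal_power ennreal_mult)
  also note box_le
  finally show ?thesis .
qed

lemma measure_unit_ball_pos: "measure (leb d) (unit_ball d) > 0"
  using emeasure_unit_ball_finite emeasure_unit_ball_pos
  by (simp add: measure_def enn2real_positive_iff)

lemma set_integral_one_unit_ball: "(LINT x:unit_ball d|leb d. 1) = measure (leb d) (unit_ball d)"
  using emeasure_unit_ball_finite by (simp add: set_integral_const[OF unit_ball_in_sets] less_imp_neq)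

lemma AE_leb_sph_norm_nonzero: "AE x in leb d. sph_norm d x \<noteq> 0"
proof (rule AE_I')
  have "emeasure (leb d) (PiE {..d} (\<lambda>_. {0::real})) = 0"
    by (subst emeasure_leb_PiE) auto
  then show "PiE {..d} (\<lambda>_. {0}) \<in> null_sets (leb d)"
    using PiE_in_sets_leb[of d "\<lambda>_. {0}"] by (simp add: null_sets_def)
  show "{x \<in> space (leb d). \<not> sph_norm d x \<noteq> 0} \<subseteq> PiE {..d} (\<lambda>_. {0})"
  proof
    fix x assume x: "x \<in> {x \<in> space (leb d). \<not> sph_norm d x \<noteq> 0}"
    then have "(\<Sum>i\<le>d. (x i)\<^sup>2) = 0" unfolding sph_norm_def by simp
    then have "\<forall>i\<in>{..d}. x i = 0" by (subst (asm) sum_nonneg_eq_0_iff) auto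
    moreover have "x \<in> extensional {..d}" using x by (simp add: space_leb PiE_def)
    ultimately show "x \<in> PiE {..d} (\<lambda>_. {0})" by (intro PiE_I) (auto simp: extensional_def)
  qed
qed

definition normalized_monomial :: "nat \<Rightarrow> nat list \<Rightarrow> (nat \<Rightarrow> real) \<Rightarrow> real" where
  "normalized_monomial d js x = prod_list (map (\<lambda>i. x i / sph_norm d x) js)"

lemma sphere_avg_monomial:
  "sphere_avg d (\<lambda>y. prod_list (map y js))
     = (LINT x:unit_ball d|leb d. normalized_monomial d js x) / measure (leb d) (unit_ball d)"
  by (simp add: sphere_avg_def normalized_monomial_def)

lemma normalized_monomial_measurable [measurable]:
  "set js \<subseteq> {..d} \<Longrightarrow> normalized_monomial d js \<in> borel_measurable (leb d)"
  unfolding normalized_monomial_def by (induction js) auto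

lemma abs_normalized_monomial_le_1:
  assumes "set js \<subseteq> {..d}"
  shows "\<bar>normalized_monomial d js x\<bar> \<le> 1"
proof -
  define y where "y = (\<lambda>i. x i / sph_norm d x)"
  have y: "\<bar>y i\<bar> \<le> 1" if "i \<le> d" for i
    using abs_le_sph_norm[OF that, of x] sph_norm_nonneg[of d x]
    by (cases "sph_norm d x = 0") (auto simp: y_def divide_le_eq_1)
  from assms have "\<bar>prod_list (map y js)\<bar> \<le> 1"
  proof (induction js)
    case (Cons i js)
    then show ?case using y by (auto simp: abs_mult intro!: mult_le_one)
  qed simp
  then show ?thesis by (simp only: normalized_monomial_def y_def)
qed

lemma set_integrable_normalized_monomial:
  "set js \<subseteq> {..d} \<Longrightarrow> set_integrable (leb d) (unit_ball d) (normalized_monomial d js)"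
  unfolding set_integrable_def
  by (rule integrableI_bounded_set[where A = "unit_ball d" and B = 1])
     (use emeasure_unit_ball_finite abs_normalized_monomial_le_1 in \<open>auto simp: indicator_def\<close>)

lemma emeasure_lborel_vimage_sign:
  fixes c :: real
  assumes "\<bar>c\<bar> = 1" and "A \<in> sets borel"
  shows "emeasure lborel ((\<lambda>t. c * t) -` A) = emeasure lborel A"
proof -
  have "distr lborel borel ((*) c) = lborel"
    using lborel_distr_mult[of c] assms(1) by (simp add: density_1)
  then have "emeasure lborel A = emeasure (distr lborel borel ((*) c)) A" by simp
  also have "\<dots> = emeasure lborel ((\<lambda>t. c * t) -` A)"
    using assms(2) by (subst emeasure_distr) auto
  finally show ?thesis ..
qed

definition signed_perm :: "nat \<Rightarrow> (nat \<Rightarrow> nat) \<Rightarrow> (nat \<Rightarrow> real) \<Rightarrow> (nat \<Rightarrow> real) \<Rightarrow> nat \<Rightarrow> real" where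
  "signed_perm d \<pi> \<sigma> x = (\<lambda>j\<in>{..d}. \<sigma> j * x (\<pi> j))"

locale signed_involution =
  fixes d :: nat and \<pi> :: "nat \<Rightarrow> nat" and \<sigma> :: "nat \<Rightarrow> real"
  assumes perm_le: "j \<le> d \<Longrightarrow> \<pi> j \<le> d"
    and perm_perm: "j \<le> d \<Longrightarrow> \<pi> (\<pi> j) = j"
    and abs_sign: "j \<le> d \<Longrightarrow> \<bar>\<sigma> j\<bar> = 1"
begin

lemma signed_perm_measurable [measurable]: "signed_perm d \<pi> \<sigma> \<in> leb d \<rightarrow>\<^sub>M leb d"
  unfolding signed_perm_def using perm_le by (simp add: leb_def)

lemma sign_times_sign: "j \<le> d \<Longrightarrow> \<sigma> j * \<sigma> j = 1"
  by (metis abs_mult_self_eq abs_sign mult_1)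

lemma signed_perm_apply: "j \<le> d \<Longrightarrow> signed_perm d \<pi> \<sigma> x j = \<sigma> j * x (\<pi> j)"
  by (simp add: signed_perm_def)

lemma bij_betw_perm: "bij_betw \<pi> {..d} {..d}"
  by (rule bij_betw_byWitness[where f' = \<pi>]) (auto simp: perm_le perm_perm)

lemma distr_signed_perm: "distr (leb d) (leb d) (signed_perm d \<pi> \<sigma>) = leb d"
proof -
  have "distr (leb d) (leb d) (signed_perm d \<pi> \<sigma>) = PiM {..d} (\<lambda>_. lborel)"
  proof (rule product_sigma_finite.PiM_eqI[OF product_sigma_finite_lborel])
    fix A :: "nat \<Rightarrow> real set" assume A: "\<And>i. i \<in> {..d} \<Longrightarrow> A i \<in> sets lborel"
    define B where "B i = (\<lambda>t. \<sigma> (\<pi> i) * t) -` A (\<pi> i)" for i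
    have B: "B i \<in> sets lborel" if "i \<le> d" for i
    proof -
      have "(\<lambda>t. \<sigma> (\<pi> i) * t) \<in> lborel \<rightarrow>\<^sub>M lborel" by simp
      from measurable_sets[OF this A[of "\<pi> i"]] show ?thesis
        using perm_le[OF that] by (simp add: B_def)
    qed
    have image_in: "signed_perm d \<pi> \<sigma> x \<in> PiE {..d} A \<longleftrightarrow> (\<forall>j\<le>d. \<sigma> j * x (\<pi> j) \<in> A j)" for x
      by (auto simp: signed_perm_def restrict_PiE_iff Pi_iff)
    have reindex: "(\<forall>j\<le>d. \<sigma> j * x (\<pi> j) \<in> A j) \<longleftrightarrow> (\<forall>i\<le>d. x i \<in> B i)" for x
      unfolding B_def by (metis perm_le perm_perm vimage_eq)
    have "signed_perm d \<pi> \<sigma> -` PiE {..d} A \<inter> space (leb d) = PiE {..d} B"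
      unfolding set_eq_iff Int_iff vimage_eq image_in reindex by (auto simp: space_leb PiE_iff)
    then have "emeasure (distr (leb d) (leb d) (signed_perm d \<pi> \<sigma>)) (PiE {..d} A)
        = emeasure (leb d) (PiE {..d} B)"
      using A by (subst emeasure_distr) (auto intro: PiE_in_sets_leb)
    also have "\<dots> = (\<Prod>i\<le>d. emeasure lborel (B i))"
      using B by (rule emeasure_leb_PiE)
    also have "\<dots> = (\<Prod>j\<le>d. emeasure lborel (B (\<pi> j)))"
      by (rule prod.reindex_bij_betw[OF bij_betw_perm, symmetric])
    also have "\<dots> = (\<Prod>j\<le>d. emeasure lborel (A j))"
      using A by (intro prod.cong refl) (simp add: B_def perm_perm abs_sign emeasure_lborel_vimage_sign)
    finally show "emeasure (distr (leb d) (leb d) (signed_perm d \<pi> \<sigma>)) (PiE {..d} A)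
        = (\<Prod>i\<in>{..d}. emeasure lborel (A i))" .
  qed (simp_all add: leb_def)
  then show ?thesis by (simp add: leb_def)
qed

lemma sph_norm_signed_perm: "sph_norm d (signed_perm d \<pi> \<sigma> x) = sph_norm d x"
proof -
  have "(\<Sum>j\<le>d. (signed_perm d \<pi> \<sigma> x j)\<^sup>2) = (\<Sum>j\<le>d. (x (\<pi> j))\<^sup>2)"
    by (intro sum.cong refl) (simp add: signed_perm_apply power2_eq_square sign_times_sign)
  also have "\<dots> = (\<Sum>j\<le>d. (x j)\<^sup>2)"
    by (rule sum.reindex_bij_betw[OF bij_betw_perm])
  finally show ?thesis by (simp add: sph_norm_def)
qed

lemma set_integral_unit_ball_signed_perm:
  fixes F :: "(nat \<Rightarrow> real) \<Rightarrow> real"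
  assumes [measurable]: "F \<in> borel_measurable (leb d)"
  shows "(LINT x:unit_ball d|leb d. F (signed_perm d \<pi> \<sigma> x)) = (LINT x:unit_ball d|leb d. F x)"
proof -
  have ball: "signed_perm d \<pi> \<sigma> x \<in> unit_ball d \<longleftrightarrow> x \<in> unit_ball d" if "x \<in> space (leb d)" for x
    using measurable_space[OF signed_perm_measurable that] that
    by (auto simp: unit_ball_def sph_norm_signed_perm)
  have "(LINT x:unit_ball d|leb d. F x)
      = integral\<^sup>L (distr (leb d) (leb d) (signed_perm d \<pi> \<sigma>)) (\<lambda>x. indicator (unit_ball d) x *\<^sub>R F x)"
    unfolding set_lebesgue_integral_def distr_signed_perm ..
  also have "\<dots> = integral\<^sup>L (leb d) (\<lambda>x. indicator (unit_ball d) (signed_perm d \<pi> \<sigma> x) *\<^sub>R F (signed_perm d \<pi> \<sigma> x))"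
    by (rule integral_distr) measurable
  also have "\<dots> = (LINT x:unit_ball d|leb d. F (signed_perm d \<pi> \<sigma> x))"
    unfolding set_lebesgue_integral_def
    by (intro Bochner_Integration.integral_cong refl) (simp add: ball indicator_def)
  finally show ?thesis ..
qed

lemma normalized_monomial_signed_perm:
  assumes "set js \<subseteq> {..d}"
  shows "normalized_monomial d js (signed_perm d \<pi> \<sigma> x)
    = prod_list (map \<sigma> js) * normalized_monomial d (map \<pi> js) x"
  unfolding normalized_monomial_def sph_norm_signed_perm using assms
  by (induction js) (simp_all add: signed_perm_apply)

end

lemma signed_involution_reflection: "a \<le> d \<Longrightarrow> signed_involution d id (\<lambda>j. if j = a then -1 else 1)"
  by unfold_locales auto

lemma signed_involution_transpose:
  "a \<le> d \<Longrightarrow> b \<le> d \<Longrightarrow> signed_involution d (Transposition.transpose a b) (\<lambda>_. 1)"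
  by unfold_locales (auto simp: Transposition.transpose_def)

lemma prod_list_reflection_sign:
  "prod_list (map (\<lambda>j. if j = a then -1 else 1) js) = (-1 :: real) ^ count_list js a"
  by (induction js) auto

lemma integral_normalized_monomial_odd:
  assumes "a \<le> d" and js: "set js \<subseteq> {..d}" and "odd (count_list js a)"
  shows "(LINT x:unit_ball d|leb d. normalized_monomial d js x) = 0"
proof -
  interpret signed_involution d id "\<lambda>j. if j = a then -1 else 1"
    using signed_involution_reflection[OF \<open>a \<le> d\<close>] .
  have "(LINT x:unit_ball d|leb d. normalized_monomial d js x)
      = (LINT x:unit_ball d|leb d. normalized_monomial d js (signed_perm d id (\<lambda>j. if j = a then -1 else 1) x))"
    using js by (intro set_integral_unit_ball_signed_perm[symmetric]) measurable
  also have "\<dots> = - (LINT x:unit_ball d|leb d. normalized_monomial d js x)"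
    using \<open>odd (count_list js a)\<close> set_integrable_normalized_monomial[OF js]
    by (simp add: normalized_monomial_signed_perm[OF js] prod_list_reflection_sign set_integral_uminus)
  finally show ?thesis by simp
qed

lemma integral_normalized_square_swap:
  assumes "a \<le> d" and "b \<le> d"
  shows "(LINT x:unit_ball d|leb d. normalized_monomial d [a, a] x)
    = (LINT x:unit_ball d|leb d. normalized_monomial d [b, b] x)"
proof -
  interpret signed_involution d "Transposition.transpose a b" "\<lambda>_. 1"
    using signed_involution_transpose[OF assms] .
  have "(LINT x:unit_ball d|leb d. normalized_monomial d [a, a] x)
      = (LINT x:unit_ball d|leb d. normalized_monomial d [a, a] (signed_perm d (Transposition.transpose a b) (\<lambda>_. 1) x))"
    using assms by (intro set_integral_unit_ball_signed_perm[symmetric]) measurable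
  also have "\<dots> = (LINT x:unit_ball d|leb d. normalized_monomial d [b, b] x)"
    using assms by (simp add: normalized_monomial_signed_perm)
  finally show ?thesis .
qed

lemma sum_normalized_squares:
  assumes "sph_norm d x \<noteq> 0"
  shows "(\<Sum>a\<le>d. normalized_monomial d [a, a] x) = 1"
proof -
  have "(\<Sum>a\<le>d. normalized_monomial d [a, a] x) = (\<Sum>a\<le>d. (x a)\<^sup>2) / (sph_norm d x)\<^sup>2"
    by (simp add: normalized_monomial_def sum_divide_distrib power_divide power2_eq_square)
  also have "(\<Sum>a\<le>d. (x a)\<^sup>2) = (sph_norm d x)\<^sup>2"
    by (simp add: sph_norm_def sum_nonneg)
  finally show ?thesis using assms by simp
qed

lemma integral_normalized_square:
  assumes "a \<le> d"
  shows "(LINT x:unit_ball d|leb d. normalized_monomial d [a, a] x) = measure (leb d) (unit_ball d) / (real d + 1)"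
proof -
  have "(\<Sum>b\<le>d. LINT x:unit_ball d|leb d. normalized_monomial d [b, b] x)
      = (LINT x:unit_ball d|leb d. (\<Sum>b\<le>d. normalized_monomial d [b, b] x))"
    unfolding set_lebesgue_integral_def scaleR_sum_right
    by (intro Bochner_Integration.integral_sum[symmetric]
        set_integrable_normalized_monomial[unfolded set_integrable_def]) auto
  also have "\<dots> = (LINT x:unit_ball d|leb d. 1)"
    unfolding set_lebesgue_integral_def
  proof (rule integral_cong_AE)
    show "AE x in leb d. indicator (unit_ball d) x *\<^sub>R (\<Sum>b\<le>d. normalized_monomial d [b, b] x)
        = indicator (unit_ball d) x *\<^sub>R 1"
      using AE_leb_sph_norm_nonzero by eventually_elim (simp add: sum_normalized_squares)
  qed measurable
  also have "\<dots> = measure (leb d) (unit_ball d)"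
    by (rule set_integral_one_unit_ball)
  finally have "(real d + 1) * (LINT x:unit_ball d|leb d. normalized_monomial d [a, a] x)
      = measure (leb d) (unit_ball d)"
    using integral_normalized_square_swap[OF _ assms] by (simp add: algebra_simps)
  then show ?thesis by (simp add: field_simps)
qed

lemma sphere_avg_low_monomial:
  assumes "set js \<subseteq> {..d}" and "length js \<le> 3"
  shows "sphere_avg d (\<lambda>y. prod_list (map y js)) = low_sphere_moment d js"
proof -
  have "(LINT x:unit_ball d|leb d. normalized_monomial d js x)
      = low_sphere_moment d js * measure (leb d) (unit_ball d)"
    using \<open>length js \<le> 3\<close>
  proof (cases rule: length_le_3_cases)
    case 1
    then show ?thesis
      by (simp add: normalized_monomial_def low_sphere_moment_def set_integral_one_unit_ball)
  next
    case (2 a)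
    then show ?thesis
      using integral_normalized_monomial_odd[of a d js] assms by (simp add: low_sphere_moment_def)
  next
    case (3 a b)
    then show ?thesis
      using integral_normalized_square[of a d] integral_normalized_monomial_odd[of a d js] assms
      by (cases "a = b") (simp_all add: low_sphere_moment_def)
  next
    case (4 a b c)
    have "\<exists>i\<in>set js. odd (count_list js i)"
      unfolding 4 by (cases "a = b"; cases "a = c"; cases "b = c") auto
    then obtain i where "i \<in> set js" and "odd (count_list js i)" ..
    then show ?thesis
      using integral_normalized_monomial_odd[of i d js] assms 4 by (auto simp: low_sphere_moment_def)
  qed
  then show ?thesis
    using measure_unit_ball_pos[of d] by (simp add: sphere_avg_monomial)
qed

section \<open>Reduction to monomials\<close>

definition monomial_list :: "nat set \<Rightarrow> (nat \<Rightarrow> nat) \<Rightarrow> nat list" where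
  "monomial_list I \<alpha> = concat (map (\<lambda>i. replicate (\<alpha> i) i) (sorted_list_of_set I))"

lemma set_monomial_list: "finite I \<Longrightarrow> set (monomial_list I \<alpha>) \<subseteq> I"
  by (auto simp: monomial_list_def)

lemma length_monomial_list: "finite I \<Longrightarrow> length (monomial_list I \<alpha>) = (\<Sum>i\<in>I. \<alpha> i)"
  by (simp add: monomial_list_def length_concat comp_def sum.distinct_set_conv_list[symmetric])

lemma prod_list_map_concat: "prod_list (map x (concat xss)) = (\<Prod>xs\<leftarrow>xss. prod_list (map x xs))"
  by (induction xss) auto

lemma prod_list_monomial_list:
  "finite I \<Longrightarrow> prod_list (map x (monomial_list I \<alpha>)) = (\<Prod>i\<in>I. x i ^ \<alpha> i)"
  by (simp add: monomial_list_def prod_list_map_concat comp_def prod_list_replicate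
      prod.distinct_set_conv_list[symmetric])

lemma sphere_avg_monomial_combination:
  assumes "finite A" and J: "\<And>a. a \<in> A \<Longrightarrow> set (J a) \<subseteq> {..d}"
  shows "sphere_avg d (\<lambda>y. \<Sum>a\<in>A. c a * prod_list (map y (J a)))
    = (\<Sum>a\<in>A. c a * sphere_avg d (\<lambda>y. prod_list (map y (J a))))"
proof -
  have "(LINT x:unit_ball d|leb d. \<Sum>a\<in>A. c a * normalized_monomial d (J a) x)
      = (\<Sum>a\<in>A. c a * (LINT x:unit_ball d|leb d. normalized_monomial d (J a) x))"
    unfolding set_lebesgue_integral_def scaleR_sum_right
    using set_integrable_normalized_monomial[OF J, unfolded set_integrable_def]
    by (subst Bochner_Integration.integral_sum) (auto simp: algebra_simps)
  then show ?thesis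
    by (simp add: sphere_avg_def normalized_monomial_def sum_divide_distrib)
qed

lemma spherical_designI_monomials:
  assumes "\<forall>k\<in>{1..N}. p k \<in> unit_sphere d"
    and moments: "\<And>js. set js \<subseteq> {..d} \<Longrightarrow> length js \<le> t \<Longrightarrow>
      sphere_avg d (\<lambda>y. prod_list (map y js)) = (\<Sum>k=1..N. prod_list (map (p k) js)) / real N"
  shows "spherical_design d t N p"
  unfolding spherical_design_def
proof (intro conjI allI impI)
  fix f assume "poly_deg_le d t f"
  define Al where "Al = {\<alpha> \<in> {..d} \<rightarrow>\<^sub>E {..t}. (\<Sum>i\<le>d. \<alpha> i) \<le> t}"
  obtain c where "\<And>x. f x = (\<Sum>\<alpha>\<in>Al. c \<alpha> * (\<Prod>i\<le>d. x i ^ \<alpha> i))"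
    using \<open>poly_deg_le d t f\<close> unfolding poly_deg_le_def Al_def by blast
  then have f: "f = (\<lambda>y. \<Sum>\<alpha>\<in>Al. c \<alpha> * prod_list (map y (monomial_list {..d} \<alpha>)))"
    by (intro ext) (simp add: prod_list_monomial_list)
  have "finite Al"
    unfolding Al_def by (rule finite_subset[OF _ finite_PiE[of "{..d}" "\<lambda>_. {..t}"]]) blast+
  have J: "set (monomial_list {..d} \<alpha>) \<subseteq> {..d}" "length (monomial_list {..d} \<alpha>) \<le> t"
    if "\<alpha> \<in> Al" for \<alpha>
    using that by (simp_all add: set_monomial_list length_monomial_list Al_def)
  have "sphere_avg d f = (\<Sum>\<alpha>\<in>Al. c \<alpha> * sphere_avg d (\<lambda>y. prod_list (map y (monomial_list {..d} \<alpha>))))"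
    unfolding f using \<open>finite Al\<close> J(1) by (rule sphere_avg_monomial_combination)
  also have "\<dots> = (\<Sum>\<alpha>\<in>Al. c \<alpha> * ((\<Sum>k=1..N. prod_list (map (p k) (monomial_list {..d} \<alpha>))) / real N))"
    using J by (simp add: moments)
  also have "\<dots> = (\<Sum>k=1..N. f (p k)) / real N"
    unfolding f by (simp add: sum_distrib_left sum_divide_distrib sum.swap[of _ Al])
  finally show "sphere_avg d f = (\<Sum>k=1..N. f (p k)) / real N" .
qed (use assms(1) in blast)

theorem mainTheorem7:
  fixes n d e s :: nat and m :: "nat \<Rightarrow> int"
  assumes "n > 0" and "odd d" and "e = (d + 1) div 2" and "s \<in> {1, 2, 3}"
    and "inj_on m {1..e}"
    and "sidon_type (m ` {1..e}) s n"
  shows "spherical_design d s n (M_col d n m)"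
proof (rule spherical_designI_monomials)
  have de: "d + 1 = 2 * e" using assms(2,3) by simp
  then show "\<forall>k\<in>{1..n}. M_col d n m k \<in> unit_sphere d"
    using M_col_in_unit_sphere by blast
  fix js assume js: "set js \<subseteq> {..d}" "length js \<le> s"
  then have "length js \<le> 3" using assms(4) by auto
  moreover have "sidon_type (m ` {1..e}) (length js) n"
    using sidon_type_mono[OF assms(6) js(2)] .
  ultimately show "sphere_avg d (\<lambda>y. prod_list (map y js))
      = (\<Sum>k=1..n. prod_list (map (M_col d n m k) js)) / real n"
    using sphere_avg_low_monomial average_M_col_monomial[OF assms(1) de assms(5)] js by simp
qed

end
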